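(* Let $\operatorname{R}_4=\{a_0,a_1,a_2,a_3\}$ be the dihedral quandle of order $4$, with $a_ia_j=a_{2j-i \pmod 4}$. Then the set of non-zero idempotents of $\mathbb{Z}[\operatorname{R}_4]$ is $$I(\mathbb{Z}[\operatorname{R}_4])=\Big\{t\big(a_0+\alpha(a_2-a_0)\big)+(1-t)\big(a_1+\beta(a_3-a_1)\big)~|~t\in\{0,1\},~\alpha,\beta\in\mathbb{Z}\Big\}.$$
   Context: For a quandle $Q$, the quandle ring $\mathbb{Z}[Q]$ is the free abelian group with basis $Q$, with multiplication $\big(\sum_i\alpha_i q_i\big)\big(\sum_j\beta_j q_j\big)=\sum_{i,j}\alpha_i\beta_j (q_iq_j)$. $I(\mathbb{Z}[Q])$ denotes the set of non-zero elements $w$ with $w^2=w$. *)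

theory Defs
  imports Main
begin

text \<open>Quandle ring Z[Q] for a finite quandle with carrier Q and operation op:
elements are integer-valued functions on the carrier, zero outside Q (finitely
supported formal sums of basis elements).\<close>

definition qring :: "'a set \<Rightarrow> ('a \<Rightarrow> int) set" where
  "qring Q = {w. \<forall>x. x \<notin> Q \<longrightarrow> w x = 0}"

definition qmult :: "'a set \<Rightarrow> ('a \<Rightarrow> 'a \<Rightarrow> 'a) \<Rightarrow> ('a \<Rightarrow> int) \<Rightarrow> ('a \<Rightarrow> int) \<Rightarrow> ('a \<Rightarrow> int)" where
  "qmult Q op u v = (\<lambda>k. \<Sum>(i,j)\<in>{(i,j). i \<in> Q \<and> j \<in> Q \<and> op i j = k}. u i * v j)"

definition basis :: "'a \<Rightarrow> ('a \<Rightarrow> int)" where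
  "basis q = (\<lambda>x. if x = q then 1 else 0)"

definition idempotents :: "'a set \<Rightarrow> ('a \<Rightarrow> 'a \<Rightarrow> 'a) \<Rightarrow> ('a \<Rightarrow> int) set" where
  "idempotents Q op = {w \<in> qring Q. w \<noteq> (\<lambda>_. 0) \<and> qmult Q op w w = w}"

definition R4 :: "nat set" where "R4 = {0,1,2,3}"

definition R4op :: "nat \<Rightarrow> nat \<Rightarrow> nat" where
  "R4op i j = nat ((2 * int j - int i) mod 4)"

end

theory Submission
  imports Defs
begin

text \<open>In \<open>R\<^sub>4\<close> the product \<open>a\<^sub>i a\<^sub>j\<close> depends on \<open>j\<close> only through its parity, so for
  \<open>w = \<Sum> w\<^sub>i a\<^sub>i\<close> the square \<open>w\<^sup>2\<close> only sees the sums \<open>E = w\<^sub>0 + w\<^sub>2\<close> and \<open>O = w\<^sub>1 + w\<^sub>3\<close>: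
  \<open>(w\<^sup>2)\<^sub>k = E w\<^sub>-\<^sub>k + O w\<^sub>2\<^sub>-\<^sub>k\<close>. Summing these over even and over odd \<open>k\<close> gives
  \<open>E (E + O) = E\<close> and \<open>O (E + O) = O\<close>, so \<open>E + O = 1\<close> for \<open>w \<noteq> 0\<close>. Subtracting the
  equations for \<open>k\<close> and \<open>k + 2\<close> gives \<open>2 O (w\<^sub>0 - w\<^sub>2) = 0\<close> and \<open>2 E (w\<^sub>1 - w\<^sub>3) = 0\<close>;
  since \<open>E + O = 1\<close> is odd, \<open>E\<close> and \<open>O\<close> cannot both be non-zero, and one of the two
  halves of \<open>w\<close> vanishes.\<close>

lemma qring_eqI:
  assumes "u \<in> qring Q" "v \<in> qring Q" "\<And>x. x \<in> Q \<Longrightarrow> u x = v x"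
  shows "u = v"
proof
  fix x
  show "u x = v x"
    using assms unfolding qring_def by (cases "x \<in> Q") auto
qed

lemma qmult_finite:
  assumes "finite Q"
  shows "qmult Q op u v k = (\<Sum>p\<in>Q \<times> Q. if op (fst p) (snd p) = k then u (fst p) * v (snd p) else 0)"
proof -
  have "{(i, j). i \<in> Q \<and> j \<in> Q \<and> op i j = k} = {p \<in> Q \<times> Q. op (fst p) (snd p) = k}"
    by auto
  then show ?thesis
    unfolding qmult_def using sum.inter_filter[OF finite_cartesian_product[OF assms assms]]
    by (simp add: case_prod_beta)
qed

lemma finite_R4: "finite R4"
  by (simp add: R4_def)

lemma qmult_R4:
  "qmult R4 R4op u v k =
    (if k = 0 then u 0 * (v 0 + v 2) + u 2 * (v 1 + v 3)
     else if k = 1 then u 3 * (v 0 + v 2) + u 1 * (v 1 + v 3)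
     else if k = 2 then u 2 * (v 0 + v 2) + u 0 * (v 1 + v 3)
     else if k = 3 then u 1 * (v 0 + v 2) + u 3 * (v 1 + v 3) else 0)"
  unfolding qmult_finite[OF finite_R4] unfolding R4_def by (simp add: R4op_def algebra_simps)

lemma R4_idempotent_equations_solutions:
  fixes w :: "nat \<Rightarrow> int"
  defines "sE \<equiv> w 0 + w 2" and "sO \<equiv> w 1 + w 3"
  assumes eq0: "w 0 * sE + w 2 * sO = w 0" and eq1: "w 3 * sE + w 1 * sO = w 1"
    and eq2: "w 2 * sE + w 0 * sO = w 2" and eq3: "w 1 * sE + w 3 * sO = w 3"
    and nonzero: "w 0 \<noteq> 0 \<or> w 1 \<noteq> 0 \<or> w 2 \<noteq> 0 \<or> w 3 \<noteq> 0"
  shows "(sE = 1 \<and> w 1 = 0 \<and> w 3 = 0) \<or> (w 0 = 0 \<and> w 2 = 0 \<and> sO = 1)"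
proof -
  have sE: "sE = w 0 + w 2" and sO: "sO = w 1 + w 3"
    by (simp_all add: sE_def sO_def)
  have even_sum: "sE = sE * (sE + sO)"
    using sE eq0 eq2 by algebra
  have odd_sum: "sO = sO * (sE + sO)"
    using sO eq1 eq3 by algebra
  have unit_sum: "sE + sO = 1"
  proof (rule contrapos_pp[OF nonzero])
    assume "\<not> ?thesis"
    with even_sum odd_sum have "sE = 0" "sO = 0"
      by (metis mult.right_neutral mult_cancel_left)+
    then show "\<not> (w 0 \<noteq> 0 \<or> w 1 \<noteq> 0 \<or> w 2 \<noteq> 0 \<or> w 3 \<noteq> 0)"
      using eq0 eq1 eq2 eq3 by simp
  qed
  have "(sE - sO) * (w 0 - w 2) = w 0 - w 2"
    using eq0 eq2 by (simp add: algebra_simps)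
  with unit_sum have even_diff: "2 * sO * (w 0 - w 2) = 0"
    by algebra
  have "(sO - sE) * (w 1 - w 3) = w 1 - w 3"
    using eq1 eq3 by (simp add: algebra_simps)
  with unit_sum have odd_diff: "2 * sE * (w 1 - w 3) = 0"
    by algebra
  consider "sO = 0" | "sE = 0" | "sE \<noteq> 0" "sO \<noteq> 0" by blast
  then show ?thesis
  proof cases
    case 1
    then show ?thesis using odd_diff unit_sum sO by simp
  next
    case 2
    then show ?thesis using even_diff unit_sum sE by simp
  next
    case 3
    with even_diff odd_diff have "w 0 = w 2" "w 1 = w 3" by simp_all
    with unit_sum have "2 * (w 0 + w 1) = 1" using sE sO by simp
    then show ?thesis by presburger
  qed
qed

lemma idempotents_R4_iff:
  "w \<in> idempotents R4 R4op \<longleftrightarrow> w \<in> qring R4 \<and>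
     ((w 0 + w 2 = 1 \<and> w 1 = 0 \<and> w 3 = 0) \<or> (w 0 = 0 \<and> w 2 = 0 \<and> w 1 + w 3 = 1))"
  (is "_ \<longleftrightarrow> _ \<and> ?halves")
proof (cases "w \<in> qring R4")
  case True
  then have outside: "w k = 0" if "k \<notin> R4" for k
    using that unfolding qring_def by simp
  have "w \<noteq> (\<lambda>_. 0) \<longleftrightarrow> (\<exists>k\<in>R4. w k \<noteq> 0)"
    using outside by (auto simp: fun_eq_iff)
  then have nonzero_iff: "w \<noteq> (\<lambda>_. 0) \<longleftrightarrow> w 0 \<noteq> 0 \<or> w 1 \<noteq> 0 \<or> w 2 \<noteq> 0 \<or> w 3 \<noteq> 0"
    by (simp add: R4_def)
  have "qmult R4 R4op w w k = w k" if "k \<notin> R4" for k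
    unfolding qmult_R4 using that outside[OF that] by (simp add: R4_def)
  then have "qmult R4 R4op w w = w \<longleftrightarrow> (\<forall>k\<in>R4. qmult R4 R4op w w k = w k)"
    by (auto simp: fun_eq_iff)
  then have idempotent_iff: "qmult R4 R4op w w = w \<longleftrightarrow>
      w 0 * (w 0 + w 2) + w 2 * (w 1 + w 3) = w 0 \<and> w 3 * (w 0 + w 2) + w 1 * (w 1 + w 3) = w 1 \<and>
      w 2 * (w 0 + w 2) + w 0 * (w 1 + w 3) = w 2 \<and> w 1 * (w 0 + w 2) + w 3 * (w 1 + w 3) = w 3"
    unfolding qmult_R4 by (simp add: R4_def)
  show ?thesis
  proof
    assume "w \<in> idempotents R4 R4op"
    then show "w \<in> qring R4 \<and> ?halves"
      unfolding idempotents_def mem_Collect_eq nonzero_iff idempotent_iff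
      using R4_idempotent_equations_solutions[of w] by blast
  next
    assume "w \<in> qring R4 \<and> ?halves"
    then have "qmult R4 R4op w w = w" "w \<noteq> (\<lambda>_. 0)"
      unfolding nonzero_iff idempotent_iff by auto
    with True show "w \<in> idempotents R4 R4op"
      unfolding idempotents_def by blast
  qed
qed (simp add: idempotents_def)

theorem proposition4p4:
  shows "idempotents R4 R4op =
    {(\<lambda>x. t * (basis 0 x + \<alpha> * (basis 2 x - basis 0 x))
          + (1 - t) * (basis 1 x + \<beta> * (basis 3 x - basis 1 x))) | t \<alpha> \<beta> :: int.
       t \<in> {0, 1}}" (is "_ = {?w t \<alpha> \<beta> | t \<alpha> \<beta>. _}")
proof (intro set_eqI iffI)
  have family: "?w t \<alpha> \<beta> \<in> qring R4" for t \<alpha> \<beta>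
    by (simp add: qring_def R4_def basis_def)
  fix w
  assume "w \<in> idempotents R4 R4op"
  then have w: "w \<in> qring R4" and
    "(w 0 + w 2 = 1 \<and> w 1 = 0 \<and> w 3 = 0) \<or> (w 0 = 0 \<and> w 2 = 0 \<and> w 1 + w 3 = 1)"
    by (simp_all add: idempotents_R4_iff)
  then have "w = ?w 1 (w 2) 0 \<or> w = ?w 0 0 (w 3)"
  proof (elim disjE conjE)
    assume "w 0 + w 2 = 1" "w 1 = 0" "w 3 = 0"
    then have "w = ?w 1 (w 2) 0"
      by (intro qring_eqI[OF w family]) (auto simp: R4_def basis_def)
    then show ?thesis ..
  next
    assume "w 0 = 0" "w 2 = 0" "w 1 + w 3 = 1"
    then have "w = ?w 0 0 (w 3)"
      by (intro qring_eqI[OF w family]) (auto simp: R4_def basis_def)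
    then show ?thesis ..
  qed
  then show "w \<in> {?w t \<alpha> \<beta> | t \<alpha> \<beta>. t \<in> {0, 1}}"
    by blast
next
  fix w
  assume "w \<in> {?w t \<alpha> \<beta> | t \<alpha> \<beta>. t \<in> {0, 1}}"
  then show "w \<in> idempotents R4 R4op"
    unfolding idempotents_R4_iff by (auto simp: qring_def R4_def basis_def)
qed

end
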